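(* Let $M_-,M_+\in\mathbb{Z}$ with $M:=M_-+M_+\ge0$, and let $V_{M_-,M_+}\in\mathbb{R}^{(M+1)\times(M+1)}$ be the Vandermonde matrix with entries $(V_{M_-,M_+})_{ij}=(i-1-M_-)^{j-1}$, $1\le i,j\le M+1$ (with $0^0=1$). Then $V_{M_-,M_+}$ is invertible and: (i) for all $i,j\in\{1,\dots,M+1\}$, $$(V_{M_-,M_+}^{-1})_{ij}=\sum_{n=0}^{M+1-i}(M_-)^n\binom{n+i-1}{n}(V_{0,M}^{-1})_{i+n,j};$$ (ii) for all $i,j\in\{1,\dots,M+1\}$, $$(V_{0,M}^{-1})_{ij}=(-1)^{i+j}\sum_{k=1}^{M+1}\frac{1}{(k-1)!}\binom{k-1}{j-1}\left[{k-1\atop i-1}\right];$$ (iii) defining $\nu_{M_-,M_+,m,k}:=\sum_{\ell=-M_-}^{M_+}(V_{M_-,M_+}^{-1})_{m+1,\ell+M_-+1}\,\ell^k$, one has $\nu_{M_-,M_+,m,k}=\delta_{mk}$ for $0\le k\le M$, $0\le m\le M$; (iv) $\sum_{m=0}^{M}\nu_{M_-,M_+,m,k}\,\ell^m=\ell^k$ for all $k\in\mathbb{N}_0$ and all $\ell\in\{-M_-,\dots,M_+\}$.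
   Context: $\left[{n\atop k}\right]$ denotes the unsigned Stirling numbers of the first kind (number of permutations of $n$ elements with exactly $k$ cycles), satisfying $\left[{n\atop 0}\right]=\delta_{n0}$ and $\left[{n+1\atop k}\right]=n\left[{n\atop k}\right]+\left[{n\atop k-1}\right]$. $V_{0,M}$ is the matrix above with $M_-=0$, $M_+=M$, i.e. entries $(i-1)^{j-1}$. *)

theory Defs
  imports "Jordan_Normal_Form.Matrix" "HOL-Combinatorics.Stirling"
begin

text \<open>Vandermonde matrix V_{M-,M+} of size (M+1)x(M+1), M = M- + M+, 0-indexed:
  entry (i,j) = (i - M-)^j, i.e. the paper's (i-1-M-)^(j-1) with 1-based indices.
  Note 0^0 = 1 in Isabelle.\<close>
definition vdm :: "int \<Rightarrow> int \<Rightarrow> real mat" where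
  "vdm Mm Mp = mat (nat (Mm + Mp) + 1) (nat (Mm + Mp) + 1)
     (\<lambda>(i, j). (real i - of_int Mm) ^ j)"

definition minv :: "real mat \<Rightarrow> real mat" where
  "minv A = (SOME B. B \<in> carrier_mat (dim_row A) (dim_row A) \<and> inverts_mat A B \<and> inverts_mat B A)"

definition nu :: "int \<Rightarrow> int \<Rightarrow> nat \<Rightarrow> nat \<Rightarrow> real" where
  "nu Mm Mp m k = (\<Sum>l = -Mm..Mp. minv (vdm Mm Mp) $$ (m, nat (l + Mm)) * of_int l ^ k)"

end

theory Submission
  imports Defs "Jordan_Normal_Form.Determinant"
begin

text \<open>Let \<open>S\<^sub>a\<close> be the upper triangular matrix expanding \<open>(x + a)\<^sup>p\<close> in powers of \<open>x\<close>.
  The binomial theorem gives \<open>V\<^sub>a S\<^sub>a = V\<^sub>0\<close>, hence \<open>V\<^sub>a\<^sup>-\<^sup>1 = S\<^sub>a V\<^sub>0\<^sup>-\<^sup>1\<close>, which is (i).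
  For the nodes \<open>0, \<dots>, M\<close>, the Stirling numbers expand rising factorials in powers,
  \<open>\<Sum>\<^sub>i s(k,i) (-r)\<^sup>i = pochhammer (-r) k = (-1)\<^sup>k k! (r choose k)\<close>; so the product of \<open>V\<^sub>0\<close>
  with the matrix of (ii) collapses to the binomial inversion
  \<open>\<Sum>\<^sub>k (-1)\<^sup>k\<^sup>+\<^sup>c (r choose k) (k choose c) = \<delta>\<^sub>r\<^sub>c\<close>.
  Finally (iii) and (iv) are the entries of \<open>V\<^sup>-\<^sup>1 V = 1\<close> and \<open>V V\<^sup>-\<^sup>1 = 1\<close>.\<close>

lemma sum_alternating_choose_mult_choose:
  "(\<Sum>k\<le>r. (-1) ^ (c + k) * of_nat (k choose c) * of_nat (r choose k) :: 'a::comm_ring_1)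
     = (if r = c then 1 else 0)"
proof (cases "c \<le> r")
  case False
  then show ?thesis by (intro trans[OF sum.neutral]) (auto simp: binomial_eq_0)
next
  case True
  have "(\<Sum>k\<le>r. (-1) ^ (c + k) * of_nat (k choose c) * of_nat (r choose k) :: 'a)
      = (\<Sum>k=c..r. (-1) ^ (c + k) * of_nat (k choose c) * of_nat (r choose k))"
    by (rule sum.mono_neutral_right) (auto simp: binomial_eq_0)
  also have "\<dots> = (\<Sum>j\<le>r-c. (-1) ^ (c + (c + j)) * of_nat ((c + j) choose c)
                                * of_nat (r choose (c + j)))"
    using True by (intro sum.reindex_bij_witness[of _ "\<lambda>j. c + j" "\<lambda>k. k - c"]) auto
  also have "\<dots> = of_nat (r choose c) * (\<Sum>j\<le>r-c. (-1) ^ j * of_nat ((r - c) choose j))"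
    unfolding sum_distrib_left
  proof (intro sum.cong refl)
    fix j assume "j \<in> {..r - c}"
    then have "(r choose (c + j)) * ((c + j) choose c) = (r choose c) * ((r - c) choose j)"
      using True choose_mult[of c "c + j" r] by simp
    then have "of_nat ((c + j) choose c) * of_nat (r choose (c + j))
             = (of_nat (r choose c) * of_nat ((r - c) choose j) :: 'a)"
      by (metis mult.commute of_nat_mult)
    moreover have "(-1) ^ (c + (c + j)) = ((-1) ^ j :: 'a)"
      by (simp add: power_add flip: power_mult_distrib)
    ultimately show "(-1) ^ (c + (c + j)) * of_nat ((c + j) choose c) * of_nat (r choose (c + j))
                   = of_nat (r choose c) * ((-1) ^ j * of_nat ((r - c) choose j) :: 'a)"
      by (metis mult.assoc mult.left_commute)
  qed
  also have "\<dots> = (if r = c then 1 else 0)"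
    using True by (auto simp: choose_alternating_sum)
  finally show ?thesis .
qed

lemma pochhammer_minus_of_nat:
  "pochhammer (- of_nat r :: 'a::field_char_0) k = (-1) ^ k * fact k * of_nat (r choose k)"
  by (simp add: binomial_gbinomial gbinomial_pochhammer flip: power_add)

lemma sum_stirling_minus_of_nat_power:
  "(\<Sum>i\<le>k. of_nat (stirling k i) * (- of_nat r) ^ i :: 'a::field_char_0)
     = (-1) ^ k * fact k * of_nat (r choose k)"
  by (simp add: stirling_pochhammer pochhammer_minus_of_nat)

lemma index_mult_mat_sum:
  assumes "A \<in> carrier_mat n k" "B \<in> carrier_mat k m" "i < n" "j < m"
  shows "(A * B) $$ (i, j) = (\<Sum>t<k. A $$ (i, t) * B $$ (t, j))"
  using assms by (auto simp: scalar_prod_def atLeast0LessThan intro!: sum.cong)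

lemma index_mult_mat_vec_sum:
  assumes "A \<in> carrier_mat n k" "v \<in> carrier_vec k" "i < n"
  shows "(A *\<^sub>v v) $ i = (\<Sum>t<k. A $$ (i, t) * v $ t)"
  using assms by (auto simp: scalar_prod_def atLeast0LessThan intro!: sum.cong)

lemma right_inverse_mat_sum:
  fixes A B :: "'a::comm_ring_1 mat"
  assumes A: "A \<in> carrier_mat n n" and B: "B \<in> carrier_mat n n"
    and AB: "A * B = 1\<^sub>m n" and r: "r < n"
  shows "(\<Sum>m<n. A $$ (r, m) * (\<Sum>t<n. B $$ (m, t) * f t)) = f r"
proof -
  define v where "v = vec n f"
  have v: "v \<in> carrier_vec n" by (simp add: v_def)
  have "(B *\<^sub>v v) $ m = (\<Sum>t<n. B $$ (m, t) * f t)" if "m < n" for m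
    using B v that by (subst index_mult_mat_vec_sum[OF B v that]) (simp add: v_def)
  then have "(\<Sum>m<n. A $$ (r, m) * (\<Sum>t<n. B $$ (m, t) * f t)) = (A *\<^sub>v (B *\<^sub>v v)) $ r"
    using A B v r by (subst index_mult_mat_vec_sum[OF A _ r]) auto
  also have "\<dots> = ((A * B) *\<^sub>v v) $ r"
    using A B v by simp
  also have "\<dots> = f r"
    using AB v r by (simp add: v_def)
  finally show ?thesis .
qed

definition shifted_vandermonde_mat :: "nat \<Rightarrow> 'a::comm_ring_1 \<Rightarrow> 'a mat" where
  "shifted_vandermonde_mat n a = mat n n (\<lambda>(i, j). (of_nat i - a) ^ j)"

definition binomial_shift_mat :: "nat \<Rightarrow> 'a::comm_ring_1 \<Rightarrow> 'a mat" where
  "binomial_shift_mat n a = mat n n (\<lambda>(i, j). a ^ (j - i) * of_nat (j choose i))"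

definition stirling_vandermonde_inv :: "nat \<Rightarrow> 'a::field_char_0 mat" where
  "stirling_vandermonde_inv n = mat n n (\<lambda>(i, j).
     (-1) ^ (i + j) * (\<Sum>k<n. (1 / fact k) * of_nat (k choose j) * of_nat (stirling k i)))"

lemma shifted_vandermonde_mat_carrier [simp]: "shifted_vandermonde_mat n a \<in> carrier_mat n n"
  by (simp add: shifted_vandermonde_mat_def)

lemma binomial_shift_mat_carrier [simp]: "binomial_shift_mat n a \<in> carrier_mat n n"
  by (simp add: binomial_shift_mat_def)

lemma stirling_vandermonde_inv_carrier [simp]: "stirling_vandermonde_inv n \<in> carrier_mat n n"
  by (simp add: stirling_vandermonde_inv_def)

lemma shifted_vandermonde_mult_binomial_shift:
  "shifted_vandermonde_mat n a * binomial_shift_mat n a = shifted_vandermonde_mat n 0"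
proof (rule eq_matI)
  fix r p assume "r < dim_row (shifted_vandermonde_mat n (0::'a))"
    and "p < dim_col (shifted_vandermonde_mat n (0::'a))"
  then have r: "r < n" and p: "p < n" by (auto simp: shifted_vandermonde_mat_def)
  have "(shifted_vandermonde_mat n a * binomial_shift_mat n a) $$ (r, p)
      = (\<Sum>i<n. (of_nat r - a) ^ i * (a ^ (p - i) * of_nat (p choose i)))"
    using r p by (subst index_mult_mat_sum[of _ n n _ n])
                 (auto simp: shifted_vandermonde_mat_def binomial_shift_mat_def intro!: sum.cong)
  also have "\<dots> = (\<Sum>i\<le>p. of_nat (p choose i) * (of_nat r - a) ^ i * a ^ (p - i))"
    using p by (intro sum.mono_neutral_cong_right) (auto simp: binomial_eq_0 mult_ac)
  also have "\<dots> = ((of_nat r - a) + a) ^ p"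
    by (rule binomial_ring[symmetric])
  finally show "(shifted_vandermonde_mat n a * binomial_shift_mat n a) $$ (r, p)
      = shifted_vandermonde_mat n 0 $$ (r, p)"
    using r p by (simp add: shifted_vandermonde_mat_def)
qed (auto simp: shifted_vandermonde_mat_def binomial_shift_mat_def)

lemma vandermonde_mult_stirling_vandermonde_inv:
  "shifted_vandermonde_mat n (0::'a::field_char_0) * stirling_vandermonde_inv n = 1\<^sub>m n"
proof (rule eq_matI)
  fix r c assume "r < dim_row (1\<^sub>m n :: 'a mat)" and "c < dim_col (1\<^sub>m n :: 'a mat)"
  then have r: "r < n" and c: "c < n" by auto
  have "(shifted_vandermonde_mat n 0 * stirling_vandermonde_inv n) $$ (r, c)
      = (\<Sum>i<n. of_nat r ^ i * ((-1) ^ (i + c)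
                * (\<Sum>k<n. (1 / fact k) * of_nat (k choose c) * of_nat (stirling k i) :: 'a)))"
    using r c by (subst index_mult_mat_sum[of _ n n _ n])
                 (auto simp: shifted_vandermonde_mat_def stirling_vandermonde_inv_def intro!: sum.cong)
  also have "\<dots> = (\<Sum>i<n. \<Sum>k<n. (-1) ^ c * (1 / fact k) * of_nat (k choose c)
                          * (of_nat (stirling k i) * (- of_nat r) ^ i))"
    by (auto simp: sum_distrib_left power_add power_minus[of "of_nat r"] mult_ac intro!: sum.cong)
  also have "\<dots> = (\<Sum>k<n. (-1) ^ c * (1 / fact k) * of_nat (k choose c)
                          * (\<Sum>i<n. of_nat (stirling k i) * (- of_nat r) ^ i))"
    by (subst sum.swap) (simp add: sum_distrib_left)
  also have "\<dots> = (\<Sum>k<n. (-1) ^ c * (1 / fact k) * of_nat (k choose c)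
                          * ((-1) ^ k * fact k * of_nat (r choose k)))"
  proof (intro sum.cong refl)
    fix k assume "k \<in> {..<n}"
    then have "(\<Sum>i<n. of_nat (stirling k i) * (- of_nat r) ^ i :: 'a)
        = (\<Sum>i\<le>k. of_nat (stirling k i) * (- of_nat r) ^ i)"
      by (intro sum.mono_neutral_right) auto
    also have "\<dots> = (-1) ^ k * fact k * of_nat (r choose k)"
      by (rule sum_stirling_minus_of_nat_power)
    finally have stirling_sum: "(\<Sum>i<n. of_nat (stirling k i) * (- of_nat r) ^ i :: 'a)
        = (-1) ^ k * fact k * of_nat (r choose k)" .
    show "(-1) ^ c * (1 / fact k) * of_nat (k choose c)
                 * (\<Sum>i<n. of_nat (stirling k i) * (- of_nat r) ^ i)
             = (-1) ^ c * (1 / fact k) * of_nat (k choose c) * ((-1) ^ k * fact k * of_nat (r choose k) :: 'a)"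
      unfolding stirling_sum ..
  qed
  also have "\<dots> = (\<Sum>k\<le>r. (-1) ^ (c + k) * of_nat (k choose c) * of_nat (r choose k))"
    using r by (intro sum.mono_neutral_cong_right) (auto simp: power_add)
  also have "\<dots> = 1\<^sub>m n $$ (r, c)"
    using r c by (simp add: sum_alternating_choose_mult_choose)
  finally show "(shifted_vandermonde_mat n 0 * stirling_vandermonde_inv n) $$ (r, c)
      = (1\<^sub>m n :: 'a mat) $$ (r, c)" .
qed (auto simp: shifted_vandermonde_mat_def stirling_vandermonde_inv_def)

lemma index_binomial_shift_mult:
  assumes "B \<in> carrier_mat n m" "i < n" "j < m"
  shows "(binomial_shift_mat n a * B) $$ (i, j)
       = (\<Sum>q = 0..n - 1 - i. a ^ q * of_nat ((q + i) choose q) * B $$ (i + q, j))"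
proof -
  have "(binomial_shift_mat n a * B) $$ (i, j) = (\<Sum>p<n. a ^ (p - i) * of_nat (p choose i) * B $$ (p, j))"
    using assms by (subst index_mult_mat_sum[of _ n n])
                   (auto simp: binomial_shift_mat_def intro!: sum.cong)
  also have "\<dots> = (\<Sum>p=i..<n. a ^ (p - i) * of_nat (p choose i) * B $$ (p, j))"
    by (intro sum.mono_neutral_right) (auto simp: binomial_eq_0)
  also have "\<dots> = (\<Sum>q = 0..n - 1 - i. a ^ q * of_nat ((q + i) choose q) * B $$ (i + q, j))"
    using assms binomial_symmetric[of i]
    by (intro sum.reindex_bij_witness[of _ "\<lambda>q. i + q" "\<lambda>p. p - i"]) (auto simp: add.commute)
  finally show ?thesis .
qed

lemma minv_eqI:
  assumes "A \<in> carrier_mat n n" "B \<in> carrier_mat n n" "A * B = 1\<^sub>m n"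
  shows "minv A = B"
proof -
  have "B * A = 1\<^sub>m n"
    using assms by (rule mat_mult_left_right_inverse)
  then have "\<exists>B. B \<in> carrier_mat (dim_row A) (dim_row A) \<and> inverts_mat A B \<and> inverts_mat B A"
    using assms by (auto simp: inverts_mat_def)
  then have "minv A \<in> carrier_mat n n" "minv A * A = 1\<^sub>m n"
    unfolding minv_def using assms(1) by (auto dest!: someI_ex simp: inverts_mat_def)
  then have "minv A = minv A * (A * B)"
    using assms by simp
  also have "\<dots> = (minv A * A) * B"
    using assms \<open>minv A \<in> carrier_mat n n\<close> by (simp add: assoc_mult_mat)
  also have "\<dots> = B"
    using assms \<open>minv A * A = 1\<^sub>m n\<close> by simp
  finally show ?thesis .
qed

lemma shifted_vandermonde_mult_inverse:
  "shifted_vandermonde_mat n (a::'a::field_char_0)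
     * (binomial_shift_mat n a * stirling_vandermonde_inv n) = 1\<^sub>m n"
  by (simp add: shifted_vandermonde_mult_binomial_shift vandermonde_mult_stirling_vandermonde_inv
           flip: assoc_mult_mat[of _ n n _ n _ n])

lemma minv_shifted_vandermonde:
  "minv (shifted_vandermonde_mat n a) = binomial_shift_mat n a * stirling_vandermonde_inv n"
  by (rule minv_eqI[OF _ _ shifted_vandermonde_mult_inverse]) (auto intro: mult_carrier_mat[of _ n n])

lemma minv_vandermonde:
  "minv (shifted_vandermonde_mat n 0) = stirling_vandermonde_inv n"
  by (rule minv_eqI[OF _ _ vandermonde_mult_stirling_vandermonde_inv]) auto

lemma shifted_vandermonde_minv:
  fixes a :: real
  shows "minv (shifted_vandermonde_mat n a) \<in> carrier_mat n n"
    and "shifted_vandermonde_mat n a * minv (shifted_vandermonde_mat n a) = 1\<^sub>m n"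
    and "minv (shifted_vandermonde_mat n a) * shifted_vandermonde_mat n a = 1\<^sub>m n"
proof -
  show car: "minv (shifted_vandermonde_mat n a) \<in> carrier_mat n n"
    by (auto simp: minv_shifted_vandermonde intro: mult_carrier_mat[of _ n n])
  show right: "shifted_vandermonde_mat n a * minv (shifted_vandermonde_mat n a) = 1\<^sub>m n"
    by (simp add: minv_shifted_vandermonde shifted_vandermonde_mult_inverse)
  show "minv (shifted_vandermonde_mat n a) * shifted_vandermonde_mat n a = 1\<^sub>m n"
    by (rule mat_mult_left_right_inverse[OF _ car right]) simp
qed

lemma vdm_eq_shifted_vandermonde_mat:
  "Mm + Mp \<ge> 0 \<Longrightarrow> vdm Mm Mp = shifted_vandermonde_mat (Suc (nat (Mm + Mp))) (of_int Mm)"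
  by (simp add: vdm_def shifted_vandermonde_mat_def)

lemma nu_eq_sum_nodes:
  assumes "Mm + Mp \<ge> 0"
  shows "nu Mm Mp m k
       = (\<Sum>t<Suc (nat (Mm + Mp)). minv (vdm Mm Mp) $$ (m, t) * (real t - of_int Mm) ^ k)"
  unfolding nu_def using assms
  by (intro sum.reindex_bij_witness[of _ "\<lambda>t. int t - Mm" "\<lambda>l. nat (l + Mm)"]) auto

lemma nu_eq_delta:
  assumes "Mm + Mp \<ge> 0" "m \<le> nat (Mm + Mp)" "k \<le> nat (Mm + Mp)"
  shows "nu Mm Mp m k = (if m = k then 1 else 0)"
proof -
  define n where "n = Suc (nat (Mm + Mp))"
  define V where "V = shifted_vandermonde_mat n (real_of_int Mm)"
  have "nu Mm Mp m k = (\<Sum>t<n. minv V $$ (m, t) * V $$ (t, k))"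
    using assms by (auto simp: nu_eq_sum_nodes vdm_eq_shifted_vandermonde_mat V_def n_def
                                 shifted_vandermonde_mat_def intro!: sum.cong)
  also have "\<dots> = (minv V * V) $$ (m, k)"
    using assms shifted_vandermonde_minv(1)
    by (subst index_mult_mat_sum[of _ n n _ n]) (auto simp: V_def n_def)
  also have "\<dots> = (if m = k then 1 else 0)"
    using assms by (simp add: V_def n_def shifted_vandermonde_minv(3))
  finally show ?thesis .
qed

lemma sum_nu_mult_power:
  assumes "l \<in> {-Mm..Mp}"
  shows "(\<Sum>m = 0..nat (Mm + Mp). nu Mm Mp m k * of_int l ^ m) = of_int l ^ k"
proof -
  define n where "n = Suc (nat (Mm + Mp))"
  define V where "V = shifted_vandermonde_mat n (real_of_int Mm)"
  define r where "r = nat (l + Mm)"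
  have Mm_Mp: "Mm + Mp \<ge> 0" and r: "r < n" and l: "real_of_int l = real r - of_int Mm"
    using assms by (auto simp: n_def r_def)
  have "(\<Sum>m = 0..nat (Mm + Mp). nu Mm Mp m k * of_int l ^ m)
      = (\<Sum>m<n. V $$ (r, m) * (\<Sum>t<n. minv V $$ (m, t) * (real t - of_int Mm) ^ k))"
    using r l Mm_Mp
    by (auto simp: n_def V_def nu_eq_sum_nodes vdm_eq_shifted_vandermonde_mat atLeast0AtMost
                   lessThan_Suc_atMost shifted_vandermonde_mat_def mult.commute intro!: sum.cong)
  also have "\<dots> = of_int l ^ k"
    using r l shifted_vandermonde_minv by (subst right_inverse_mat_sum) (auto simp: V_def)
  finally show ?thesis .
qed

theorem lemma7:
  fixes Mm Mp :: int
  assumes "Mm + Mp \<ge> 0"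
  defines "M \<equiv> nat (Mm + Mp)"
  shows "invertible_mat (vdm Mm Mp)
    \<and> (\<forall>i \<le> M. \<forall>j \<le> M. minv (vdm Mm Mp) $$ (i, j)
          = (\<Sum>n = 0..M - i. (of_int Mm) ^ n * of_nat ((n + i) choose n)
                               * minv (vdm 0 (Mm + Mp)) $$ (i + n, j)))
    \<and> (\<forall>i \<le> M. \<forall>j \<le> M. minv (vdm 0 (Mm + Mp)) $$ (i, j)
          = (-1) ^ (i + j) * (\<Sum>k = 0..M. (1 / fact k) * of_nat (k choose j) * of_nat (stirling k i)))
    \<and> (\<forall>m \<le> M. \<forall>k \<le> M. nu Mm Mp m k = (if m = k then 1 else 0))
    \<and> (\<forall>k :: nat. \<forall>l \<in> {-Mm..Mp}. (\<Sum>m = 0..M. nu Mm Mp m k * of_int l ^ m) = of_int l ^ k)"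
proof (intro conjI allI impI ballI)
  have V: "vdm Mm Mp = shifted_vandermonde_mat (Suc M) (of_int Mm)"
    and V0: "vdm 0 (Mm + Mp) = shifted_vandermonde_mat (Suc M) 0"
    using assms vdm_eq_shifted_vandermonde_mat[of 0 "Mm + Mp"]
    by (simp_all add: M_def vdm_eq_shifted_vandermonde_mat)
  show "invertible_mat (vdm Mm Mp)"
    unfolding V invertible_mat_def inverts_mat_def
    using shifted_vandermonde_minv[of "Suc M" "of_int Mm"]
    by (auto simp: carrier_matD[OF shifted_vandermonde_mat_carrier])
  fix i j assume i: "i \<le> M" and j: "j \<le> M"
  show "minv (vdm Mm Mp) $$ (i, j) = (\<Sum>n = 0..M - i. (of_int Mm) ^ n * of_nat ((n + i) choose n)
                                        * minv (vdm 0 (Mm + Mp)) $$ (i + n, j))"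
    unfolding V V0 minv_vandermonde unfolding minv_shifted_vandermonde
    using i j by (subst index_binomial_shift_mult[of _ "Suc M" "Suc M"]) auto
  show "minv (vdm 0 (Mm + Mp)) $$ (i, j) = (-1) ^ (i + j)
          * (\<Sum>k = 0..M. (1 / fact k) * of_nat (k choose j) * of_nat (stirling k i))"
    using i j by (simp add: V0 minv_vandermonde stirling_vandermonde_inv_def atLeast0AtMost
                            lessThan_Suc_atMost)
  show "nu Mm Mp i j = (if i = j then 1 else 0)"
    using assms i j by (simp add: M_def nu_eq_delta)
next
  fix k l assume "l \<in> {-Mm..Mp}"
  then show "(\<Sum>m = 0..M. nu Mm Mp m k * of_int l ^ m) = of_int l ^ k"
    unfolding M_def by (rule sum_nu_mult_power)
qed

end
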